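(* In the uncensored delayed-feedback bandit model (see context), let $a^*\in\{1,\dots,K\}$ satisfy $\theta_{a^*}\ge\theta_k$ for all $k$, and for any policy let $L(T)=\mathbb{E}[r^*(T)-r(T)]$. Then \[ L(T)=\sum_{s=1}^T\mathbb{E}[\theta_{a^*}-\theta_{A_s}]\,\tau_{T-s}, \] where $\tau_{T-s}=\mathbb{P}(D_s\le T-s)$. Moreover, with $N_k(T)=\sum_{s=1}^T\mathbf{1}\{A_s=k\}$, \[ L(T)\le\sum_{k=1}^K(\theta_{a^*}-\theta_k)\mathbb{E}[N_k(T)], \] and if $\mu=\mathbb{E}[D_s]<\infty$, \[ \sum_{k=1}^K(\theta_{a^*}-\theta_k)\mathbb{E}[N_k(T)]-L(T)\le\mu\sum_{k=1}^K(\theta_{a^*}-\theta_k). \]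
   Context: Uncensored delayed-feedback bandit model: $K$ arms with conversion rates $\theta_1,\dots,\theta_K\in[0,1]$; a delay distribution on $\mathbb{N}=\{0,1,\dots\}$ with CDF $\tau_d=\mathbb{P}(D\le d)$. At each round $t=1,2,\dots$ the learner picks $A_t\in\{1,\dots,K\}$ as a function of past observations; this triggers $C_t\in\{0,1\}$ and $D_t\in\mathbb{N}$, conditionally independent given the past, with $C_t\sim\mathrm{Bernoulli}(\theta_{A_t})$ and $D_t$ with CDF $\tau$. With $X_{s,t}=C_s\mathbf{1}\{D_s\le t-s\}$, at round $t$ the learner observes all $X_{s,t}$, $1\le s\le t$, and receives reward $Y_t=\sum_{s=1}^tC_s\mathbf{1}\{D_s=t-s\}$. $r(T)=\sum_{t=1}^TY_t$ is the learner's cumulated reward and $r^*(T)$ the cumulated reward of an oracle playing $A_t=a^*$ at every round. *)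

theory Defs
  imports "HOL-Probability.Probability"
begin

text \<open>A history of the first t rounds: list whose (s-1)-th entry is (A_s, C_s, D_s).\<close>
type_synonym hist = "(nat \<times> bool \<times> nat) list"

text \<open>Observations available after the rounds recorded in h (t = length h):
  for each past round s (0-indexed here), the played arm A_s and the list of
  observed values X_{s,u} = C_s * 1{D_s <= u - s} for u = s, ..., t.\<close>
definition obs :: "hist \<Rightarrow> (nat \<times> bool list) list" where
  "obs h = map (\<lambda>s. case h ! s of (a, c, d) \<Rightarrow>
              (a, map (\<lambda>u. c \<and> d \<le> u - s) [s..<length h])) [0..<length h]"

text \<open>Law of the history after t rounds under the (deterministic) policy pi, which maps
  past observations to an arm; C_t ~ Bernoulli(theta A_t) and D_t ~ Dl,
  conditionally independent given the past.\<close>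
fun run :: "(nat \<Rightarrow> real) \<Rightarrow> nat pmf \<Rightarrow> ((nat \<times> bool list) list \<Rightarrow> nat) \<Rightarrow> nat \<Rightarrow> hist pmf" where
  "run \<theta> Dl \<pi> 0 = return_pmf []"
| "run \<theta> Dl \<pi> (Suc t) =
     bind_pmf (run \<theta> Dl \<pi> t) (\<lambda>h.
       bind_pmf (bernoulli_pmf (\<theta> (\<pi> (obs h)))) (\<lambda>c.
         bind_pmf Dl (\<lambda>d. return_pmf (h @ [(\<pi> (obs h), c, d)]))))"

definition arm :: "hist \<Rightarrow> nat \<Rightarrow> nat" where
  "arm h s = fst (h ! (s - 1))"

definition Yrew :: "hist \<Rightarrow> nat \<Rightarrow> real" where
  "Yrew h t = (\<Sum>s = 1..t. case h ! (s - 1) of (a, c, d) \<Rightarrow>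
                  (if c then 1 else 0) * (if d = t - s then 1 else 0))"

definition cumrew :: "hist \<Rightarrow> nat \<Rightarrow> real" where
  "cumrew h T = (\<Sum>t = 1..T. Yrew h t)"

definition Ncount :: "hist \<Rightarrow> nat \<Rightarrow> nat \<Rightarrow> real" where
  "Ncount h k T = (\<Sum>s = 1..T. if arm h s = k then 1 else 0)"

definition tau :: "nat pmf \<Rightarrow> nat \<Rightarrow> real" where
  "tau Dl d = measure_pmf.prob Dl {..d}"

definition Lreg :: "(nat \<Rightarrow> real) \<Rightarrow> nat pmf \<Rightarrow> ((nat \<times> bool list) list \<Rightarrow> nat) \<Rightarrow> nat \<Rightarrow> nat \<Rightarrow> real" where
  "Lreg \<theta> Dl \<pi> astar T =
     measure_pmf.expectation (run \<theta> Dl (\<lambda>_. astar) T) (\<lambda>h. cumrew h T)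
   - measure_pmf.expectation (run \<theta> Dl \<pi> T) (\<lambda>h. cumrew h T)"

end

theory Submission
  imports Defs
begin

text \<open>
  Exchanging the order of summation, r(T) = \<Sum>_s X_{s,T}: every conversion is counted once,
  at its arrival time, provided this is at most T. Given the history before round s, the pair
  (C_s, D_s) is drawn independently with means depending only on A_s, so
  E[X_{s,T}] = E[\<theta>(A_s)] \<tau>_{T-s}; for the oracle this is \<theta>(a*) \<tau>_{T-s}, which gives the formula
  for L(T). Since \<Sum>_k \<Delta>_k E[N_k(T)] = \<Sum>_s E[\<Delta>(A_s)] with every gap in [0, \<Sum>_k \<Delta>_k], both bounds
  follow from \<tau> \<le> 1 and \<Sum>_{j<T} P(D > j) \<le> E[D].
\<close>

lemma integrable_measure_pmf_bounded:
  fixes f :: "'a \<Rightarrow> real"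
  assumes "\<And>x. x \<in> set_pmf M \<Longrightarrow> \<bar>f x\<bar> \<le> B"
  shows "integrable (measure_pmf M) f"
  by (rule measure_pmf.integrable_const_bound[where B=B]) (auto intro!: AE_pmfI assms)

lemma expectation_bind_pmf_bounded:
  fixes f :: "'b \<Rightarrow> real"
  assumes bounded: "\<And>y. y \<in> set_pmf (bind_pmf M N) \<Longrightarrow> \<bar>f y\<bar> \<le> B"
  shows "measure_pmf.expectation (bind_pmf M N) f
       = measure_pmf.expectation M (\<lambda>x. measure_pmf.expectation (N x) f)"
proof -
  \<comment> \<open>\<open>integral_bind\<close> wants a global bound, so clip \<open>f\<close> outside the support.\<close>
  define g where "g y = max (-\<bar>B\<bar>) (min \<bar>B\<bar> (f y))" for y
  have f_eq_g: "f y = g y" if "y \<in> set_pmf (bind_pmf M N)" for y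
    using bounded[OF that] by (auto simp: g_def)
  have "measure_pmf.expectation (bind_pmf M N) f = measure_pmf.expectation (bind_pmf M N) g"
    by (rule integral_cong_AE) (auto intro!: AE_pmfI f_eq_g)
  also have "\<dots> = measure_pmf.expectation M (\<lambda>x. measure_pmf.expectation (N x) g)"
    unfolding measure_pmf_bind
    by (rule integral_bind[where K="count_space UNIV" and B="\<bar>B\<bar>" and B'=1])
       (auto simp: g_def measure_pmf.subprob_measure_le_1 measure_pmf_in_subprob_algebra)
  also have "\<dots> = measure_pmf.expectation M (\<lambda>x. measure_pmf.expectation (N x) f)"
    by (rule integral_cong_AE) (auto intro!: AE_pmfI integral_cong_AE f_eq_g[symmetric])
  finally show ?thesis .
qed

lemma set_pmf_run:
  assumes "h \<in> set_pmf (run \<theta> Dl p t)"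
  shows length_run: "length h = t" and arm_run: "\<And>i. i < t \<Longrightarrow> fst (h ! i) \<in> range p"
  using assms by (induction t arbitrary: h) (auto simp: nth_append less_Suc_eq)

lemma map_pmf_take_run: "s \<le> t \<Longrightarrow> map_pmf (take s) (run \<theta> Dl p t) = run \<theta> Dl p s"
proof (induction t)
  case 0
  then show ?case by simp
next
  case (Suc t)
  show ?case
  proof (cases "s = Suc t")
    case True
    then have "map_pmf (take s) (run \<theta> Dl p (Suc t)) = map_pmf id (run \<theta> Dl p (Suc t))"
      by (intro map_pmf_cong) (auto dest: length_run)
    then show ?thesis using True by (simp add: pmf.map_id)
  next
    case False
    with Suc.prems have "s \<le> t" by simp
    then have "map_pmf (take s) (run \<theta> Dl p (Suc t)) = map_pmf (take s) (run \<theta> Dl p t)"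
      unfolding run.simps map_bind_pmf map_return_pmf
      by (simp add: map_pmf_def bind_assoc_pmf bind_return_pmf)
         (intro bind_pmf_cong, auto dest: length_run simp: bind_pmf_const)
    with Suc.IH \<open>s \<le> t\<close> show ?thesis by simp
  qed
qed

lemma expectation_run_take:
  fixes f :: "hist \<Rightarrow> real"
  assumes "s \<le> T" and "\<And>h. f (take s h) = f h"
  shows "measure_pmf.expectation (run \<theta> Dl p T) f = measure_pmf.expectation (run \<theta> Dl p s) f"
proof -
  have "measure_pmf.expectation (run \<theta> Dl p T) f
      = measure_pmf.expectation (map_pmf (take s) (run \<theta> Dl p T)) f"
    by (simp add: assms(2))
  then show ?thesis by (simp add: map_pmf_take_run[OF assms(1)])
qed

lemma expectation_run_round:
  fixes f :: "nat \<Rightarrow> bool \<Rightarrow> nat \<Rightarrow> real"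
  assumes "t < T" and bounded: "\<And>x c d. \<bar>f (p x) c d\<bar> \<le> B"
  shows "measure_pmf.expectation (run \<theta> Dl p T) (\<lambda>h. case h ! t of (a, c, d) \<Rightarrow> f a c d)
       = measure_pmf.expectation (run \<theta> Dl p t) (\<lambda>h.
           measure_pmf.expectation (bernoulli_pmf (\<theta> (p (obs h)))) (\<lambda>c.
             measure_pmf.expectation Dl (f (p (obs h)) c)))"
    (is "_ = measure_pmf.expectation _ ?G")
proof -
  let ?F = "\<lambda>h. case h ! t of (a, c, d) \<Rightarrow> f a c d"
  have F_bounded: "\<bar>?F y\<bar> \<le> B" if "y \<in> set_pmf (run \<theta> Dl p (Suc t))" for y
    using arm_run[OF that, of t] bounded by (auto split: prod.split)
  have "measure_pmf.expectation (run \<theta> Dl p T) ?F = measure_pmf.expectation (run \<theta> Dl p (Suc t)) ?F"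
    using \<open>t < T\<close> by (intro expectation_run_take) auto
  also have "\<dots> = measure_pmf.expectation (run \<theta> Dl p t) (\<lambda>h.
      measure_pmf.expectation (bind_pmf (bernoulli_pmf (\<theta> (p (obs h)))) (\<lambda>c.
        bind_pmf Dl (\<lambda>d. return_pmf (h @ [(p (obs h), c, d)])))) ?F)"
    unfolding run.simps by (rule expectation_bind_pmf_bounded) (use F_bounded in simp)
  also have "\<dots> = measure_pmf.expectation (run \<theta> Dl p t) ?G"
  proof (intro integral_cong_AE AE_pmfI)
    fix h assume "h \<in> set_pmf (run \<theta> Dl p t)"
    then have F_last: "?F (h @ [(p (obs h), c, d)]) = f (p (obs h)) c d" for c d
      by (simp add: length_run nth_append)
    show "measure_pmf.expectation (bind_pmf (bernoulli_pmf (\<theta> (p (obs h)))) (\<lambda>c.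
        bind_pmf Dl (\<lambda>d. return_pmf (h @ [(p (obs h), c, d)])))) ?F = ?G h"
      by (subst expectation_bind_pmf_bounded[where B=B],
          use bounded F_last in \<open>auto intro!: integral_cong_AE AE_pmfI expectation_bind_pmf_bounded[where B=B, THEN trans]\<close>)
  qed simp_all
  finally show ?thesis .
qed

definition observed_reward :: "hist \<Rightarrow> nat \<Rightarrow> nat \<Rightarrow> real" where
  "observed_reward h T s = (case h ! (s - 1) of (a, c, d) \<Rightarrow>
     (if c then 1 else 0) * (if d \<le> T - s then 1 else 0))"

lemma observed_reward_Suc:
  assumes "s \<le> T"
  shows "observed_reward h (Suc T) s = observed_reward h T s + (case h ! (s - 1) of (a, c, d) \<Rightarrow>
           (if c then 1 else 0) * (if d = Suc T - s then 1 else 0))"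
  using assms by (auto simp: observed_reward_def Suc_diff_le le_Suc_eq split: prod.split)

lemma cumrew_eq_sum_observed_reward: "cumrew h T = (\<Sum>s = 1..T. observed_reward h T s)"
proof (induction T)
  case 0
  then show ?case by (simp add: cumrew_def)
next
  case (Suc T)
  have "cumrew h (Suc T) = cumrew h T + Yrew h (Suc T)"
    by (simp add: cumrew_def)
  also have "\<dots> = (\<Sum>s = 1..T. observed_reward h T s)
      + (\<Sum>s = 1..T. case h ! (s - 1) of (a, c, d) \<Rightarrow>
           (if c then 1 else 0) * (if d = Suc T - s then 1 else 0))
      + observed_reward h (Suc T) (Suc T)"
    by (simp add: Suc Yrew_def observed_reward_def split: prod.split)
  also have "\<dots> = (\<Sum>s = 1..Suc T. observed_reward h (Suc T) s)"
    by (simp add: observed_reward_Suc sum.distrib)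
  finally show ?case .
qed

lemma tau_eq_expectation: "tau Dl j = measure_pmf.expectation Dl (\<lambda>d. if d \<le> j then 1 else 0)"
proof -
  have "(\<lambda>d. if d \<le> j then 1 else 0 :: real) = indicator {..j}"
    by (auto simp: indicator_def)
  then show ?thesis by (simp add: tau_def)
qed

lemma arm_run_range:
  assumes "h \<in> set_pmf (run \<theta> Dl p T)" and "s \<in> {1..T}"
  shows "arm h s \<in> range p"
  using arm_run[OF assms(1), of "s - 1"] assms(2) by (auto simp: arm_def)

lemma expectation_theta_arm:
  assumes theta_bounded: "\<And>x. \<bar>\<theta> (p x)\<bar> \<le> 1" and "t < T"
  shows "measure_pmf.expectation (run \<theta> Dl p T) (\<lambda>h. \<theta> (arm h (Suc t)))
       = measure_pmf.expectation (run \<theta> Dl p t) (\<lambda>h. \<theta> (p (obs h)))"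
  using expectation_run_round[where f="\<lambda>a c d. \<theta> a", OF \<open>t < T\<close> theta_bounded]
  by (simp add: arm_def case_prod_beta)

lemma expectation_observed_reward_Suc:
  assumes theta01: "\<And>x. 0 \<le> \<theta> (p x) \<and> \<theta> (p x) \<le> 1" and "t < T"
  shows "measure_pmf.expectation (run \<theta> Dl p T) (\<lambda>h. observed_reward h T (Suc t))
       = measure_pmf.expectation (run \<theta> Dl p t) (\<lambda>h. \<theta> (p (obs h))) * tau Dl (T - Suc t)"
  using expectation_run_round[where B=1 and
      f="\<lambda>a c d. (if c then 1 else 0) * (if d \<le> T - Suc t then 1 else 0)", OF \<open>t < T\<close>]
  by (simp add: observed_reward_def theta01 tau_eq_expectation)

lemma expectation_observed_reward:
  assumes theta01: "\<And>x. 0 \<le> \<theta> (p x) \<and> \<theta> (p x) \<le> 1" and "s \<in> {1..T}"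
  shows "measure_pmf.expectation (run \<theta> Dl p T) (\<lambda>h. observed_reward h T s)
       = measure_pmf.expectation (run \<theta> Dl p T) (\<lambda>h. \<theta> (arm h s)) * tau Dl (T - s)"
proof -
  obtain t where "s = Suc t" "t < T"
    using \<open>s \<in> {1..T}\<close> by (cases s) auto
  moreover have "\<bar>\<theta> (p x)\<bar> \<le> 1" for x
    using theta01[of x] by simp
  ultimately show ?thesis
    using expectation_observed_reward_Suc[where \<theta>=\<theta> and p=p, OF theta01] expectation_theta_arm by simp
qed

lemma expectation_cumrew:
  assumes "\<And>x. 0 \<le> \<theta> (p x) \<and> \<theta> (p x) \<le> 1"
  shows "measure_pmf.expectation (run \<theta> Dl p T) (\<lambda>h. cumrew h T)
       = (\<Sum>s = 1..T. measure_pmf.expectation (run \<theta> Dl p T) (\<lambda>h. \<theta> (arm h s)) * tau Dl (T - s))"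
proof -
  have "integrable (measure_pmf (run \<theta> Dl p T)) (\<lambda>h. observed_reward h T s)" for s
    by (rule integrable_measure_pmf_bounded[where B=1])
       (auto simp: observed_reward_def split: prod.split)
  then have "measure_pmf.expectation (run \<theta> Dl p T) (\<lambda>h. cumrew h T)
      = (\<Sum>s = 1..T. measure_pmf.expectation (run \<theta> Dl p T) (\<lambda>h. observed_reward h T s))"
    by (simp add: cumrew_eq_sum_observed_reward Bochner_Integration.integral_sum)
  also have "\<dots> = (\<Sum>s = 1..T. measure_pmf.expectation (run \<theta> Dl p T) (\<lambda>h. \<theta> (arm h s)) * tau Dl (T - s))"
    by (intro sum.cong refl expectation_observed_reward assms)
  finally show ?thesis .
qed

lemma expectation_cumrew_const:
  assumes "0 \<le> \<theta> a" and "\<theta> a \<le> 1"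
  shows "measure_pmf.expectation (run \<theta> Dl (\<lambda>_. a) T) (\<lambda>h. cumrew h T)
     = (\<Sum>s = 1..T. \<theta> a * tau Dl (T - s))"
proof -
  have "measure_pmf.expectation (run \<theta> Dl (\<lambda>_. a) T) (\<lambda>h. \<theta> (arm h s)) = \<theta> a"
    if "s \<in> {1..T}" for s
    using arm_run_range[OF _ that] by (subst integral_cong_AE[where g="\<lambda>_. \<theta> a"]) (auto intro!: AE_pmfI)
  then show ?thesis
    using assms by (simp add: expectation_cumrew)
qed

lemma integrable_run_arm:
  fixes g :: "nat \<Rightarrow> real"
  assumes "\<And>x. \<bar>g (p x)\<bar> \<le> B" and "s \<in> {1..T}"
  shows "integrable (measure_pmf (run \<theta> Dl p T)) (\<lambda>h. g (arm h s))"
proof (rule integrable_measure_pmf_bounded[where B=B])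
  fix h assume "h \<in> set_pmf (run \<theta> Dl p T)"
  then obtain x where "arm h s = p x"
    using arm_run_range[OF _ assms(2)] by blast
  with assms(1) show "\<bar>g (arm h s)\<bar> \<le> B" by simp
qed

lemma Lreg_eq_sum_expected_gap:
  assumes theta01: "\<And>x. 0 \<le> \<theta> (\<pi> x) \<and> \<theta> (\<pi> x) \<le> 1" and "0 \<le> \<theta> a" and "\<theta> a \<le> 1"
  shows "Lreg \<theta> Dl \<pi> a T = (\<Sum>s = 1..T.
           measure_pmf.expectation (run \<theta> Dl \<pi> T) (\<lambda>h. \<theta> a - \<theta> (arm h s)) * tau Dl (T - s))"
proof -
  have "measure_pmf.expectation (run \<theta> Dl \<pi> T) (\<lambda>h. \<theta> a - \<theta> (arm h s))
      = \<theta> a - measure_pmf.expectation (run \<theta> Dl \<pi> T) (\<lambda>h. \<theta> (arm h s))" if "s \<in> {1..T}" for s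
    using integrable_run_arm[where g=\<theta> and B=1, OF _ that] theta01 by simp
  then show ?thesis
    unfolding Lreg_def expectation_cumrew_const[where \<theta>=\<theta>, OF assms(2,3)]
    using theta01 by (simp add: expectation_cumrew sum_subtractf[symmetric] left_diff_distrib)
qed

lemma sum_weighted_Ncount:
  assumes "\<And>s. s \<in> {1..T} \<Longrightarrow> arm h s \<in> {1..K}"
  shows "(\<Sum>k = 1..K. g k * Ncount h k T) = (\<Sum>s = 1..T. g (arm h s))"
proof -
  have "(\<Sum>k = 1..K. g k * Ncount h k T) = (\<Sum>k = 1..K. \<Sum>s = 1..T. if arm h s = k then g k else 0)"
    by (simp add: Ncount_def sum_distrib_left if_distrib cong: if_cong)
  also have "\<dots> = (\<Sum>s = 1..T. \<Sum>k = 1..K. if arm h s = k then g k else 0)"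
    by (rule sum.swap)
  also have "\<dots> = (\<Sum>s = 1..T. g (arm h s))"
    using assms by (intro sum.cong) auto
  finally show ?thesis .
qed

lemma sum_weighted_expected_Ncount:
  fixes g :: "nat \<Rightarrow> real"
  assumes pol: "\<And>x. \<pi> x \<in> {1..K}"
  shows "(\<Sum>k = 1..K. g k * measure_pmf.expectation (run \<theta> Dl \<pi> T) (\<lambda>h. Ncount h k T))
       = (\<Sum>s = 1..T. measure_pmf.expectation (run \<theta> Dl \<pi> T) (\<lambda>h. g (arm h s)))"
proof -
  let ?R = "run \<theta> Dl \<pi> T"
  have arm_K: "arm h s \<in> {1..K}" if "h \<in> set_pmf (run \<theta> Dl \<pi> T)" "s \<in> {1..T}" for h s
    using arm_run_range[OF that] pol by auto
  have "\<bar>Ncount h k T\<bar> \<le> real T" for h k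
  proof -
    have "0 \<le> Ncount h k T" "Ncount h k T \<le> (\<Sum>s = 1..T. 1)"
      unfolding Ncount_def by (intro sum_nonneg sum_mono; simp)+
    then show ?thesis by simp
  qed
  then have "integrable (measure_pmf ?R) (\<lambda>h. Ncount h k T)" for k
    by (intro integrable_measure_pmf_bounded)
  then have "(\<Sum>k = 1..K. g k * measure_pmf.expectation ?R (\<lambda>h. Ncount h k T))
      = measure_pmf.expectation ?R (\<lambda>h. \<Sum>k = 1..K. g k * Ncount h k T)"
    by (simp add: Bochner_Integration.integral_sum)
  also have "\<dots> = measure_pmf.expectation ?R (\<lambda>h. \<Sum>s = 1..T. g (arm h s))"
    using sum_weighted_Ncount[OF arm_K] by (intro integral_cong_AE AE_pmfI) auto
  also have "\<dots> = (\<Sum>s = 1..T. measure_pmf.expectation ?R (\<lambda>h. g (arm h s)))"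
    using pol by (intro Bochner_Integration.integral_sum integrable_run_arm[where B="\<Sum>k = 1..K. \<bar>g k\<bar>"])
      (auto intro: member_le_sum[where f="\<lambda>k. \<bar>g k\<bar>"])
  finally show ?thesis .
qed

lemma sum_one_minus_tau_le_expectation:
  assumes "integrable (measure_pmf Dl) real"
  shows "(\<Sum>j<n. 1 - tau Dl j) \<le> measure_pmf.expectation Dl real"
proof -
  let ?exceeds = "\<lambda>j d. if d \<le> j then 0 else 1 :: real"
  have "1 - tau Dl j = measure_pmf.expectation Dl (?exceeds j)" for j
  proof -
    have "?exceeds j = (\<lambda>d. 1 - (if d \<le> j then 1 else 0))" by auto
    then show ?thesis
      by (simp add: tau_eq_expectation integrable_measure_pmf_bounded[where B=1])
  qed
  then have "(\<Sum>j<n. 1 - tau Dl j) = measure_pmf.expectation Dl (\<lambda>d. \<Sum>j<n. ?exceeds j d)"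
    by (simp add: Bochner_Integration.integral_sum integrable_measure_pmf_bounded[where B=1])
  also have "\<dots> \<le> measure_pmf.expectation Dl real"
  proof (rule integral_mono[OF _ assms])
    show "integrable (measure_pmf Dl) (\<lambda>d. \<Sum>j<n. ?exceeds j d)"
      by (simp add: integrable_measure_pmf_bounded[where B=1])
    show "(\<Sum>j<n. ?exceeds j d) \<le> real d" for d
    proof -
      have "(\<Sum>j<n. ?exceeds j d) = real (card ({..<n} \<inter> {..<d}))"
        by (simp add: sum.If_cases Int_def not_le)
      also have "\<dots> \<le> real (card {..<d})"
        by (intro of_nat_mono card_mono) auto
      also have "\<dots> = real d" by simp
      finally show ?thesis .
    qed
  qed
  finally show ?thesis .
qed

lemma sum_times_one_minus_tau_le:
  fixes g :: "nat \<Rightarrow> real"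
  assumes "integrable (measure_pmf Dl) real" and "0 \<le> M" and "\<And>s. s \<in> {1..T} \<Longrightarrow> g s \<le> M"
  shows "(\<Sum>s = 1..T. g s) - (\<Sum>s = 1..T. g s * tau Dl (T - s)) \<le> M * measure_pmf.expectation Dl real"
proof -
  have tau_le_1: "tau Dl j \<le> 1" for j
    by (simp add: tau_def)
  have "(\<Sum>s = 1..T. g s) - (\<Sum>s = 1..T. g s * tau Dl (T - s)) = (\<Sum>s = 1..T. g s * (1 - tau Dl (T - s)))"
    by (simp add: sum_subtractf[symmetric] algebra_simps)
  also have "\<dots> \<le> (\<Sum>s = 1..T. M * (1 - tau Dl (T - s)))"
    using assms(3) tau_le_1 by (intro sum_mono mult_right_mono) auto
  also have "\<dots> = M * (\<Sum>j<T. 1 - tau Dl j)"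
    by (simp add: sum_distrib_left sum.atLeast1_atMost_eq
        sum.nat_diff_reindex[where g="\<lambda>j. M * (1 - tau Dl j)"])
  also have "\<dots> \<le> M * measure_pmf.expectation Dl real"
    using sum_one_minus_tau_le_expectation[OF assms(1)] assms(2) by (rule mult_left_mono)
  finally show ?thesis .
qed

lemma expected_gap_bounds:
  assumes pol: "\<And>x. \<pi> x \<in> {1..K}" and best: "\<And>k. k \<in> {1..K} \<Longrightarrow> \<theta> k \<le> \<theta> a"
    and "s \<in> {1..T}"
  shows "0 \<le> measure_pmf.expectation (run \<theta> Dl \<pi> T) (\<lambda>h. \<theta> a - \<theta> (arm h s))"
    and "measure_pmf.expectation (run \<theta> Dl \<pi> T) (\<lambda>h. \<theta> a - \<theta> (arm h s))
           \<le> (\<Sum>k = 1..K. \<theta> a - \<theta> k)"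
proof -
  have gap: "0 \<le> \<theta> a - \<theta> (arm h s) \<and> \<theta> a - \<theta> (arm h s) \<le> (\<Sum>k = 1..K. \<theta> a - \<theta> k)"
    if "h \<in> set_pmf (run \<theta> Dl \<pi> T)" for h
  proof -
    have "arm h s \<in> {1..K}"
      using arm_run_range[OF that \<open>s \<in> {1..T}\<close>] pol by auto
    then show ?thesis
      using best by (auto intro: member_le_sum[where f="\<lambda>k. \<theta> a - \<theta> k"])
  qed
  then show "0 \<le> measure_pmf.expectation (run \<theta> Dl \<pi> T) (\<lambda>h. \<theta> a - \<theta> (arm h s))"
    by (intro integral_nonneg_AE AE_pmfI) auto
  have gaps_nonneg: "0 \<le> (\<Sum>k = 1..K. \<theta> a - \<theta> k)"
    using best by (intro sum_nonneg) auto
  have "measure_pmf.expectation (run \<theta> Dl \<pi> T) (\<lambda>h. \<theta> a - \<theta> (arm h s))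
      \<le> measure_pmf.expectation (run \<theta> Dl \<pi> T) (\<lambda>_. \<Sum>k = 1..K. \<theta> a - \<theta> k)"
    using gap gaps_nonneg
    by (intro integral_mono_AE AE_pmfI integrable_measure_pmf_bounded) (auto simp: abs_le_iff)
  then show "measure_pmf.expectation (run \<theta> Dl \<pi> T) (\<lambda>h. \<theta> a - \<theta> (arm h s))
           \<le> (\<Sum>k = 1..K. \<theta> a - \<theta> k)"
    by simp
qed

theorem lemma1:
  fixes K :: nat and \<theta> :: "nat \<Rightarrow> real" and Dl :: "nat pmf"
    and \<pi> :: "(nat \<times> bool list) list \<Rightarrow> nat" and astar :: nat and T :: nat
  assumes "K \<ge> 1"
    and theta01: "\<And>k. k \<in> {1..K} \<Longrightarrow> 0 \<le> \<theta> k \<and> \<theta> k \<le> 1"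
    and pol: "\<And>x. \<pi> x \<in> {1..K}"
    and astar: "astar \<in> {1..K}"
    and best: "\<And>k. k \<in> {1..K} \<Longrightarrow> \<theta> k \<le> \<theta> astar"
  shows "(Lreg \<theta> Dl \<pi> astar T =
           (\<Sum>s = 1..T. measure_pmf.expectation (run \<theta> Dl \<pi> T)
                           (\<lambda>h. \<theta> astar - \<theta> (arm h s)) * tau Dl (T - s)))
       \<and> (Lreg \<theta> Dl \<pi> astar T \<le>
           (\<Sum>k = 1..K. (\<theta> astar - \<theta> k) *
              measure_pmf.expectation (run \<theta> Dl \<pi> T) (\<lambda>h. Ncount h k T)))
       \<and> (integrable (measure_pmf Dl) real \<longrightarrow>
         (\<Sum>k = 1..K. (\<theta> astar - \<theta> k) *
              measure_pmf.expectation (run \<theta> Dl \<pi> T) (\<lambda>h. Ncount h k T))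
           - Lreg \<theta> Dl \<pi> astar T
         \<le> measure_pmf.expectation Dl real * (\<Sum>k = 1..K. (\<theta> astar - \<theta> k)))"
proof -
  let ?gap = "\<lambda>s. measure_pmf.expectation (run \<theta> Dl \<pi> T) (\<lambda>h. \<theta> astar - \<theta> (arm h s))"
  have L: "Lreg \<theta> Dl \<pi> astar T = (\<Sum>s = 1..T. ?gap s * tau Dl (T - s))"
    using theta01 pol astar by (intro Lreg_eq_sum_expected_gap) auto
  have N: "(\<Sum>k = 1..K. (\<theta> astar - \<theta> k) *
             measure_pmf.expectation (run \<theta> Dl \<pi> T) (\<lambda>h. Ncount h k T)) = (\<Sum>s = 1..T. ?gap s)"
    using sum_weighted_expected_Ncount[OF pol] .
  have gap_bounds: "0 \<le> ?gap s" "?gap s \<le> (\<Sum>k = 1..K. \<theta> astar - \<theta> k)" if "s \<in> {1..T}" for s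
    using expected_gap_bounds[where \<pi>=\<pi> and K=K and \<theta>=\<theta> and a=astar and s=s and T=T and Dl=Dl]
      pol best that by blast+
  have "(\<Sum>s = 1..T. ?gap s * tau Dl (T - s)) \<le> (\<Sum>s = 1..T. ?gap s)"
    using gap_bounds(1) by (intro sum_mono) (simp add: mult_left_le tau_def)
  moreover have "0 \<le> (\<Sum>k = 1..K. \<theta> astar - \<theta> k)"
    using best by (intro sum_nonneg) auto
  ultimately show ?thesis
    unfolding L N using sum_times_one_minus_tau_le[OF _ _ gap_bounds(2)] by (auto simp: mult.commute)
qed

end
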